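(* Let $K$ be a field, $f\colon R\to S$ a morphism of Zinbiel algebras, $l\ge1$, and let $\Theta_t=\theta_0+\theta_lt^l+\theta_{l+1}t^{l+1}+\cdots$ (so $\theta_1=\dots=\theta_{l-1}=0$) be a deformation of $f$ such that $\theta_l$ is a $2$-coboundary in $C^2_{\mathrm{Zinb}}(f,f)$. Then there exists a formal isomorphism of $f$ of the form $\Phi_t=(\mathrm{Id}_R+\phi_Rt^l;\ \mathrm{Id}_S+\phi_St^l)$ with $\phi_R\in\mathrm{Hom}_K(R,R)$, $\phi_S\in\mathrm{Hom}_K(S,S)$, such that the deformation $\overline{\Theta}_t=\sum_{i\ge0}\overline{\theta}_it^i:=\Phi_t\Theta_t\Phi_t^{-1}$ satisfies $\overline{\theta}_i=0$ for $1\le i\le l$.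
   Context: A Zinbiel algebra over $K$ is a $K$-vector space $R$ with bilinear product $x\cdot y$ (also written $m_R(x,y)$) satisfying $(x\cdot y)\cdot z=x\cdot(y\cdot z)+x\cdot(z\cdot y)$. A morphism $f\colon R\to S$ is a linear map with $f(x\cdot y)=f(x)\cdot f(y)$. $R$ is a bimodule over itself, $S$ over itself, and $S$ is an $R$-bimodule via $r\cdot s=f(r)\cdot s$, $s\cdot r=s\cdot f(r)$. For a bimodule $A$ over $R$ and $1\le n\le4$, $C^n_{\mathrm{Zinb}}(R,A)=\mathrm{Hom}_K(R^{\otimes n},A)$ with $(d^1\varphi)(x,y)=x\cdot\varphi(y)-\varphi(x\cdot y)+\varphi(x)\cdot y$, $(d^2\varphi)(x,y,z)=x\cdot(\varphi(y,z)+\varphi(z,y))-\varphi(x\cdot y,z)+\varphi(x,y\cdot z+z\cdot y)-\varphi(x,y)\cdot z$, $(d^3\varphi)(x,y,z,w)=x\cdot\{\varphi(y,z,w)-\varphi(z,w,y)+\varphi(z,y,w)-\varphi(w,z,y)\}-\varphi(x\cdot y,z,w)+\varphi(x,y\cdot z+z\cdot y,w)-\varphi(x,y,z\cdot w+w\cdot z)+\varphi(x,y,z)\cdot w$. The deformation complex: $C^0_{\mathrm{Zinb}}(R,S)=0$, $d^0=0$, $C^n_{\mathrm{Zinb}}(f,f)=C^n_{\mathrm{Zinb}}(R,R)\times C^n_{\mathrm{Zinb}}(S,S)\times C^{n-1}_{\mathrm{Zinb}}(R,S)$ ($1\le n\le4$), $d^i_f(\xi;\pi;\varphi)=(d^i\xi;d^i\pi;f\xi-\pi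 f-d^{i-1}\varphi)$ with $(f\xi)(x_1,\dots)=f(\xi(x_1,\dots))$, $(\pi f)(x_1,\dots)=\pi(f(x_1),\dots)$. Elements of $C^1_{\mathrm{Zinb}}(f,f)$ are pairs $(\xi;\pi)$; a $2$-coboundary is an element $d^1_f(\xi;\pi)$. A deformation of $f$ is a formal power series $\Theta_t=\sum_{i\ge0}\theta_it^i$ with $\theta_0=(m_R;m_S;f)$ and $\theta_i=(m_{R,i};m_{S,i};f_i)\in C^2_{\mathrm{Zinb}}(f,f)$, such that for $*=R,S$ the bilinear map $M_{*,t}=\sum_i m_{*,i}t^i$ satisfies $M_{*,t}(M_{*,t}(x,y),z)=M_{*,t}(x,M_{*,t}(y,z))+M_{*,t}(x,M_{*,t}(z,y))$, and $F_t=\sum_if_it^i$ satisfies $F_t(M_{R,t}(x,y))=M_{S,t}(F_t(x),F_t(y))$. A formal isomorphism of $f$ is $\Phi_t=(\Phi_{R,t};\Phi_{S,t})=\sum_{i\ge0}(\phi_{R,i};\phi_{S,i})t^i$ with $(\phi_{R,0};\phi_{S,0})=(\mathrm{Id}_R;\mathrm{Id}_S)$ and $\phi_{R,i}\in\mathrm{Hom}_K(R,R)$, $\phi_{S,i}\in\mathrm{Hom}_K(S,S)$. For a deformation $\Theta_t=(M_{R,t};M_{S,t};F_t)$, $\Phi_t\Theta_t\Phi_t^{-1}$ is the deformation $(\Phi_{R,t}M_{R,t}\Phi_{R,t}^{-1};\ \Phi_{S,t}M_{S,t}\Phi_{S,t}^{-1};\ \Phi_{S,t}F_t\Phi_{R,t}^{-1})$,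 where $(\Phi M\Phi^{-1})(x,y)=\Phi(M(\Phi^{-1}x,\Phi^{-1}y))$. *)

theory Defs
  imports Complex_Main
begin

text \<open>A formal power series
 \<Sum> a_i t^i of (multi)linear maps is modelled as the coefficient sequence a :: nat \<Rightarrow> \<dots>.\<close>

definition bilinear_K :: "('k::field \<Rightarrow> 'a::ab_group_add \<Rightarrow> 'a) \<Rightarrow> ('k \<Rightarrow> 'b::ab_group_add \<Rightarrow> 'b)
    \<Rightarrow> ('a \<Rightarrow> 'a \<Rightarrow> 'b) \<Rightarrow> bool" where
  "bilinear_K s1 s2 m \<longleftrightarrow>
     (\<forall>x. Vector_Spaces.linear s1 s2 (\<lambda>y. m x y)) \<and> (\<forall>y. Vector_Spaces.linear s1 s2 (\<lambda>x. m x y))"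

definition zinbiel :: "('k::field \<Rightarrow> 'a::ab_group_add \<Rightarrow> 'a) \<Rightarrow> ('a \<Rightarrow> 'a \<Rightarrow> 'a) \<Rightarrow> bool" where
  "zinbiel s m \<longleftrightarrow> vector_space s \<and> bilinear_K s s m \<and>
     (\<forall>x y z. m (m x y) z = m x (m y z) + m x (m z y))"

definition zinbiel_morphism :: "('k::field \<Rightarrow> 'a::ab_group_add \<Rightarrow> 'a) \<Rightarrow> ('k \<Rightarrow> 'b::ab_group_add \<Rightarrow> 'b)
    \<Rightarrow> ('a \<Rightarrow> 'a \<Rightarrow> 'a) \<Rightarrow> ('b \<Rightarrow> 'b \<Rightarrow> 'b) \<Rightarrow> ('a \<Rightarrow> 'b) \<Rightarrow> bool" where
  "zinbiel_morphism sR sS mR mS f \<longleftrightarrow>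
     zinbiel sR mR \<and> zinbiel sS mS \<and> Vector_Spaces.linear sR sS f \<and>
     (\<forall>x y. f (mR x y) = mS (f x) (f y))"

text \<open>The Zinbiel coboundary d^1 for the bimodule R over itself (both actions are the product m).\<close>
definition zinb_d1 :: "('a::ab_group_add \<Rightarrow> 'a \<Rightarrow> 'a) \<Rightarrow> ('a \<Rightarrow> 'a) \<Rightarrow> 'a \<Rightarrow> 'a \<Rightarrow> 'a" where
  "zinb_d1 m \<phi> x y = m x (\<phi> y) - \<phi> (m x y) + m (\<phi> x) y"

text \<open>(\<theta>R, \<theta>S, \<theta>f) \<in> C^2(f,f) is a 2-coboundary: it equals d^1_f(\<xi>;\<pi>) for some
  (\<xi>;\<pi>) \<in> C^1(f,f) = Hom(R,R) \<times> Hom(S,S) (recall C^0(R,S)=0, d^0=0).\<close>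
definition zinb_2_coboundary where
  "zinb_2_coboundary sR sS mR mS f \<theta>R \<theta>S \<theta>f \<longleftrightarrow>
     (\<exists>\<xi> \<pi>. Vector_Spaces.linear sR sR \<xi> \<and> Vector_Spaces.linear sS sS \<pi> \<and>
        \<theta>R = zinb_d1 mR \<xi> \<and> \<theta>S = zinb_d1 mS \<pi> \<and> \<theta>f = (\<lambda>x. f (\<xi> x) - \<pi> (f x)))"

text \<open>Coefficients of M_t(M_t(x,y),z), M_t(x,M_t(y,z)) etc.\<close>
definition zinbiel_series :: "(nat \<Rightarrow> 'a::ab_group_add \<Rightarrow> 'a \<Rightarrow> 'a) \<Rightarrow> bool" where
  "zinbiel_series M \<longleftrightarrow> (\<forall>n x y z.
     (\<Sum>i\<le>n. M i (M (n - i) x y) z) =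
     (\<Sum>i\<le>n. M i x (M (n - i) y z)) + (\<Sum>i\<le>n. M i x (M (n - i) z y)))"

definition morphism_series :: "(nat \<Rightarrow> 'a::ab_group_add \<Rightarrow> 'a \<Rightarrow> 'a) \<Rightarrow> (nat \<Rightarrow> 'b::ab_group_add \<Rightarrow> 'b \<Rightarrow> 'b)
    \<Rightarrow> (nat \<Rightarrow> 'a \<Rightarrow> 'b) \<Rightarrow> bool" where
  "morphism_series MR MS F \<longleftrightarrow> (\<forall>n x y.
     (\<Sum>i\<le>n. F i (MR (n - i) x y)) =
     (\<Sum>a\<le>n. \<Sum>b\<le>n - a. MS a (F b x) (F (n - a - b) y)))"

text \<open>Deformation \<Theta>_t = \<Sum> (MR i; MS i; F i) t^i of the morphism f.\<close>
definition zinb_deformation where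
  "zinb_deformation sR sS mR mS f MR MS F \<longleftrightarrow>
     MR 0 = mR \<and> MS 0 = mS \<and> F 0 = f \<and>
     (\<forall>i. bilinear_K sR sR (MR i) \<and> bilinear_K sS sS (MS i) \<and> Vector_Spaces.linear sR sS (F i)) \<and>
     zinbiel_series MR \<and> zinbiel_series MS \<and> morphism_series MR MS F"

text \<open>Inverse of a formal power series P of endomorphisms with P 0 = Id:
  Q 0 = Id, Q n = - \<Sum>_{i<n} P (n - i) \<circ> Q i, so that P_t \<circ> Q_t = Id.\<close>
fun ser_inv :: "(nat \<Rightarrow> 'a \<Rightarrow> 'a::ab_group_add) \<Rightarrow> nat \<Rightarrow> 'a \<Rightarrow> 'a" where
  "ser_inv P 0 x = x"
| "ser_inv P (Suc n) x = - (\<Sum>i\<le>n. P (Suc n - i) (ser_inv P i x))"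

text \<open>n-th coefficient of \<Phi>_t M_t \<Phi>_t^{-1} (bilinear) and of \<Phi>S_t F_t \<Phi>R_t^{-1} (linear).\<close>
definition conj_bil :: "(nat \<Rightarrow> 'a \<Rightarrow> 'a::ab_group_add) \<Rightarrow> (nat \<Rightarrow> 'a \<Rightarrow> 'a \<Rightarrow> 'a) \<Rightarrow> nat \<Rightarrow> 'a \<Rightarrow> 'a \<Rightarrow> 'a" where
  "conj_bil P M n x y =
     (\<Sum>a\<le>n. \<Sum>b\<le>n - a. \<Sum>c\<le>n - a - b.
        P a (M b (ser_inv P c x) (ser_inv P (n - a - b - c) y)))"

definition conj_lin :: "(nat \<Rightarrow> 'b \<Rightarrow> 'b::ab_group_add) \<Rightarrow> (nat \<Rightarrow> 'a::ab_group_add \<Rightarrow> 'a)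
    \<Rightarrow> (nat \<Rightarrow> 'a \<Rightarrow> 'b) \<Rightarrow> nat \<Rightarrow> 'a \<Rightarrow> 'b" where
  "conj_lin PS PR F n x = (\<Sum>a\<le>n. \<Sum>b\<le>n - a. PS a (F b (ser_inv PR (n - a - b) x)))"

definition id_plus_tl :: "nat \<Rightarrow> ('a \<Rightarrow> 'a::zero) \<Rightarrow> nat \<Rightarrow> 'a \<Rightarrow> 'a" where
  "id_plus_tl l \<phi> n = (if n = 0 then id else if n = l then \<phi> else (\<lambda>_. 0))"

end

(* The conjugating automorphism Id + \<phi> t^l has inverse Id - \<phi> t^l + O(t^(2l)).  Since \<Theta>_t
   has no terms of degree 1, ..., l-1, neither has its conjugate, and the degree-l term of the
   conjugate is \<theta>_l - d^1_f(\<phi>R; \<phi>S).  Taking for (\<phi>R; \<phi>S) a primitive of the coboundary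
   \<theta>_l kills it. *)

theory Submission
  imports Defs
begin

lemmas linear_map_zero = module_hom.zero[OF Vector_Spaces.linear.axioms(3)]
lemmas linear_map_minus = module_hom.neg[OF Vector_Spaces.linear.axioms(3)]

lemma bilinear_K_zero:
  assumes "bilinear_K s1 s2 m"
  shows "m 0 y = 0" "m x 0 = 0"
  using assms linear_map_zero unfolding bilinear_K_def by blast+

lemma bilinear_K_minus:
  assumes "bilinear_K s1 s2 m"
  shows "m (- x) y = - m x y" "m x (- y) = - m x y"
  using assms linear_map_minus unfolding bilinear_K_def by blast+

lemma sum_atMost_ends:
  fixes g :: "nat \<Rightarrow> 'a::comm_monoid_add"
  assumes "0 < l" "\<And>a. 0 < a \<Longrightarrow> a < l \<Longrightarrow> g a = 0"
  shows "(\<Sum>a\<le>l. g a) = g 0 + g l"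
proof -
  have "(\<Sum>a\<le>l. g a) = (\<Sum>a\<in>{0, l}. g a)"
    by (rule sum.mono_neutral_right) (use assms in auto)
  then show ?thesis
    using assms by simp
qed

lemma id_plus_tl_0 [simp]: "id_plus_tl l \<phi> 0 = id"
  by (simp add: id_plus_tl_def)

lemma id_plus_tl_top [simp]: "0 < l \<Longrightarrow> id_plus_tl l \<phi> l = \<phi>"
  by (simp add: id_plus_tl_def)

lemma id_plus_tl_other [simp]: "a \<noteq> 0 \<Longrightarrow> a \<noteq> l \<Longrightarrow> id_plus_tl l \<phi> a = (\<lambda>_. 0)"
  by (simp add: id_plus_tl_def)

lemma ser_inv_id_plus_tl_below:
  assumes "0 < c" "c < l"
  shows "ser_inv (id_plus_tl l \<phi>) c x = 0"
proof -
  obtain n where "c = Suc n"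
    using assms by (cases c) auto
  then show ?thesis
    using assms by simp
qed

lemma ser_inv_id_plus_tl_top:
  assumes "0 < l"
  shows "ser_inv (id_plus_tl l \<phi>) l x = - \<phi> x"
proof -
  obtain n where l: "l = Suc n"
    using assms by (cases l) auto
  let ?P = "id_plus_tl (Suc n) \<phi>"
  have "?P (Suc n - i) y = 0" if "i \<in> {..n} - {0}" for i y
    using that by auto
  then have "(\<Sum>i\<in>{..n} - {0}. ?P (Suc n - i) (ser_inv ?P i x)) = 0"
    by (intro sum.neutral) blast
  then have "(\<Sum>i\<le>n. ?P (Suc n - i) (ser_inv ?P i x)) = \<phi> x"
    by (simp add: sum.remove[of "{..n}" 0])
  then show ?thesis
    using l by simp
qed

lemma conj_bil_id_plus_tl_below:
  assumes "0 < n" "n < l"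
    and "\<And>b. 0 < b \<Longrightarrow> b < l \<Longrightarrow> M b = (\<lambda>x y. 0)"
    and bil: "bilinear_K s s (M 0)"
  shows "conj_bil (id_plus_tl l \<phi>) M n = (\<lambda>x y. 0)"
proof (intro ext)
  fix x y
  let ?P = "id_plus_tl l \<phi>"
  have "?P a (M b (ser_inv ?P c x) (ser_inv ?P (n - a - b - c) y)) = 0"
    if "a \<le> n" "b \<le> n - a" "c \<le> n - a - b" for a b c
  proof -
    consider "a \<noteq> 0" | "a = 0" "b \<noteq> 0" | "a = 0" "b = 0" "c \<noteq> 0" | "a = 0" "b = 0" "c = 0"
      by blast
    then show ?thesis
      by cases (use that assms in \<open>simp_all add: ser_inv_id_plus_tl_below bilinear_K_zero[OF bil]\<close>)
  qed
  then show "conj_bil ?P M n x y = 0"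
    unfolding conj_bil_def by (simp add: sum.neutral)
qed

lemma conj_bil_id_plus_tl_top:
  assumes l: "0 < l"
    and gap: "\<And>b. 0 < b \<Longrightarrow> b < l \<Longrightarrow> M b = (\<lambda>x y. 0)"
    and bil: "bilinear_K s s (M 0)"
  shows "conj_bil (id_plus_tl l \<phi>) M l = (\<lambda>x y. M l x y - zinb_d1 (M 0) \<phi> x y)"
proof (intro ext)
  fix x y
  let ?P = "id_plus_tl l \<phi>"
  let ?Q = "ser_inv ?P"
  have inner: "(\<Sum>c\<le>l. M 0 (?Q c x) (?Q (l - c) y)) = M 0 x (- \<phi> y) + M 0 (- \<phi> x) y"
    by (subst sum_atMost_ends)
      (use l in \<open>auto simp: ser_inv_id_plus_tl_below ser_inv_id_plus_tl_top bilinear_K_zero[OF bil]\<close>)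
  have "(\<Sum>b\<le>l. \<Sum>c\<le>l - b. M b (?Q c x) (?Q (l - b - c) y))
      = M 0 x (- \<phi> y) + M 0 (- \<phi> x) y + M l x y"
    by (subst sum_atMost_ends) (use l gap inner in auto)
  then show "conj_bil ?P M l x y = M l x y - zinb_d1 (M 0) \<phi> x y"
    unfolding conj_bil_def zinb_d1_def
    by (subst sum_atMost_ends) (use l in \<open>auto simp: bilinear_K_minus[OF bil]\<close>)
qed

lemma conj_lin_id_plus_tl_below:
  assumes "0 < n" "n < l"
    and "\<And>b. 0 < b \<Longrightarrow> b < l \<Longrightarrow> F b = (\<lambda>x. 0)"
    and lin: "Vector_Spaces.linear s1 s2 (F 0)"
  shows "conj_lin (id_plus_tl l \<phi>S) (id_plus_tl l \<phi>R) F n = (\<lambda>x. 0)"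
proof (intro ext)
  fix x
  have "id_plus_tl l \<phi>S a (F b (ser_inv (id_plus_tl l \<phi>R) (n - a - b) x)) = 0"
    if "a \<le> n" "b \<le> n - a" for a b
  proof -
    consider "a \<noteq> 0" | "a = 0" "b \<noteq> 0" | "a = 0" "b = 0"
      by blast
    then show ?thesis
      by cases (use that assms in \<open>simp_all add: ser_inv_id_plus_tl_below linear_map_zero[OF lin]\<close>)
  qed
  then show "conj_lin (id_plus_tl l \<phi>S) (id_plus_tl l \<phi>R) F n x = 0"
    unfolding conj_lin_def by (simp add: sum.neutral)
qed

lemma conj_lin_id_plus_tl_top:
  assumes l: "0 < l"
    and gap: "\<And>b. 0 < b \<Longrightarrow> b < l \<Longrightarrow> F b = (\<lambda>x. 0)"
    and lin: "Vector_Spaces.linear s1 s2 (F 0)"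
  shows "conj_lin (id_plus_tl l \<phi>S) (id_plus_tl l \<phi>R) F l
    = (\<lambda>x. F l x - (F 0 (\<phi>R x) - \<phi>S (F 0 x)))"
proof (intro ext)
  fix x
  have "(\<Sum>b\<le>l. F b (ser_inv (id_plus_tl l \<phi>R) (l - b) x)) = F 0 (- \<phi>R x) + F l x"
    by (subst sum_atMost_ends) (use l gap in \<open>auto simp: ser_inv_id_plus_tl_top\<close>)
  then show "conj_lin (id_plus_tl l \<phi>S) (id_plus_tl l \<phi>R) F l x = F l x - (F 0 (\<phi>R x) - \<phi>S (F 0 x))"
    unfolding conj_lin_def
    by (subst sum_atMost_ends) (use l in \<open>auto simp: linear_map_minus[OF lin]\<close>)
qed

theorem theorem4p1:
  fixes sR :: "'k::field \<Rightarrow> 'r::ab_group_add \<Rightarrow> 'r"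
    and sS :: "'k \<Rightarrow> 's::ab_group_add \<Rightarrow> 's"
    and mR :: "'r \<Rightarrow> 'r \<Rightarrow> 'r" and mS :: "'s \<Rightarrow> 's \<Rightarrow> 's" and f :: "'r \<Rightarrow> 's"
    and MR :: "nat \<Rightarrow> 'r \<Rightarrow> 'r \<Rightarrow> 'r" and MS :: "nat \<Rightarrow> 's \<Rightarrow> 's \<Rightarrow> 's" and F :: "nat \<Rightarrow> 'r \<Rightarrow> 's"
    and l :: nat
  assumes "zinbiel_morphism sR sS mR mS f"
    and "l \<ge> 1"
    and "zinb_deformation sR sS mR mS f MR MS F"
    and "\<forall>i. 1 \<le> i \<and> i < l \<longrightarrow> MR i = (\<lambda>x y. 0) \<and> MS i = (\<lambda>x y. 0) \<and> F i = (\<lambda>x. 0)"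
    and "zinb_2_coboundary sR sS mR mS f (MR l) (MS l) (F l)"
  shows "\<exists>\<phi>R \<phi>S. Vector_Spaces.linear sR sR \<phi>R \<and> Vector_Spaces.linear sS sS \<phi>S \<and>
           (\<forall>i. 1 \<le> i \<and> i \<le> l \<longrightarrow>
              conj_bil (id_plus_tl l \<phi>R) MR i = (\<lambda>x y. 0) \<and>
              conj_bil (id_plus_tl l \<phi>S) MS i = (\<lambda>x y. 0) \<and>
              conj_lin (id_plus_tl l \<phi>S) (id_plus_tl l \<phi>R) F i = (\<lambda>x. 0))"
proof -
  obtain \<xi> \<pi> where "Vector_Spaces.linear sR sR \<xi>" "Vector_Spaces.linear sS sS \<pi>"
    and MR_l: "MR l = zinb_d1 mR \<xi>" and MS_l: "MS l = zinb_d1 mS \<pi>"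
    and F_l: "F l = (\<lambda>x. f (\<xi> x) - \<pi> (f x))"
    using assms(5) unfolding zinb_2_coboundary_def by blast
  have base: "MR 0 = mR" "MS 0 = mS" "F 0 = f"
    using assms(3) unfolding zinb_deformation_def by auto
  have bil: "bilinear_K sR sR mR" "bilinear_K sS sS mS" and lin: "Vector_Spaces.linear sR sS f"
    using assms(1) unfolding zinbiel_morphism_def zinbiel_def by auto
  have l: "0 < l"
    using assms(2) by simp
  have gap: "MR b = (\<lambda>x y. 0)" "MS b = (\<lambda>x y. 0)" "F b = (\<lambda>x. 0)" if "0 < b" "b < l" for b
    using assms(4) that by auto
  have "conj_bil (id_plus_tl l \<xi>) MR i = (\<lambda>x y. 0) \<and>
      conj_bil (id_plus_tl l \<pi>) MS i = (\<lambda>x y. 0) \<and>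
      conj_lin (id_plus_tl l \<pi>) (id_plus_tl l \<xi>) F i = (\<lambda>x. 0)" if "1 \<le> i" "i \<le> l" for i
  proof (cases "i < l")
    case True
    then show ?thesis
      using that base bil lin gap
      by (simp add: conj_bil_id_plus_tl_below conj_lin_id_plus_tl_below)
  next
    case False
    with that have "i = l"
      by simp
    then show ?thesis
      using l base bil lin gap
      by (simp add: conj_bil_id_plus_tl_top conj_lin_id_plus_tl_top MR_l MS_l F_l)
  qed
  then show ?thesis
    using \<open>Vector_Spaces.linear sR sR \<xi>\<close> \<open>Vector_Spaces.linear sS sS \<pi>\<close> by blast
qed

end
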